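(* Let $(\mathfrak{A},\varphi,\tau)$ be a $*$-dynamical system and let $\mathfrak{S}$ and $\mathfrak{T}$ be $\varphi$-total sets in $\mathfrak{A}$. Then: (i) If $(\mathfrak{A},\varphi,\tau)$ is ergodic, then $\frac1n\sum_{k=0}^{n-1}\varphi\left(A\tau^k(B)\right)\to\varphi(A)\varphi(B)$ as $n\to\infty$ for all $A,B\in\mathfrak{A}$. (ii) If $\frac1n\sum_{k=0}^{n-1}\varphi\left(A\tau^k(B)\right)\to\varphi(A)\varphi(B)$ as $n\to\infty$ for all $A\in\mathfrak{S}^*$ and $B\in\mathfrak{T}$, then $(\mathfrak{A},\varphi,\tau)$ is ergodic.
   Context: All algebras are over $\mathbb{C}$. A state on a unital $*$-algebra $\mathfrak{A}$ is a linear functional $\varphi$ with $\varphi(A^*A)\ge0$ for all $A$ and $\varphi(1)=1$. A $*$-dynamical system is a triple $(\mathfrak{A},\varphi,\tau)$ with $\mathfrak{A}$ a unital $*$-algebra, $\varphi$ a state, and $\tau:\mathfrak{A}\to\mathfrak{A}$ linear with $\tau(1)=1$ and $\varphi(\tau(A)^*\tau(A))\le\varphi(A^*A)$ for all $A$. Let $\|A\|_\varphi=\sqrt{\varphi(A^*A)}$ and identify $\alpha\in\mathbb{C}$ with $\alpha1$. The system is ergodic if for every sequence $(A_n)$ with $\|\tau(A_n)-A_n\|_\varphi\to0$ which is Cauchy for $\|\cdot\|_\varphi$ (for every $\varepsilon>0$ there is $N$ with $\|A_m-A_n\|_\varphi\le\varepsilon$ for $m,n>N$), there is $\alpha\in\mathbb{C}$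 with $\|A_n-\alpha\|_\varphi\to0$. A subset of $\mathfrak{A}$ is $\varphi$-total if its linear span is dense in the seminormed space $(\mathfrak{A},\|\cdot\|_\varphi)$. For $\mathfrak{S}\subseteq\mathfrak{A}$, $\mathfrak{S}^*=\{A^*:A\in\mathfrak{S}\}$. *)

theory Defs
  imports Complex_Main
begin

text \<open>A unital complex *-algebra is modelled on a type 'a of class ring_1
 (unital associative ring), together with a complex scalar multiplication
 smul and an involution st (the star operation).\<close>

definition star_algebra :: "(complex \<Rightarrow> 'a::ring_1 \<Rightarrow> 'a) \<Rightarrow> ('a \<Rightarrow> 'a) \<Rightarrow> bool" where
  "star_algebra smul st \<longleftrightarrow>
     (\<forall>a b x. smul a (x + b) = smul a x + smul a b) \<and>
     (\<forall>a b x. smul (a + b) x = smul a x + smul b x) \<and>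
     (\<forall>a b x. smul a (smul b x) = smul (a * b) x) \<and>
     (\<forall>x. smul 1 x = x) \<and>
     (\<forall>a x y. smul a (x * y) = smul a x * y) \<and>
     (\<forall>a x y. smul a (x * y) = x * smul a y) \<and>
     (\<forall>x. st (st x) = x) \<and>
     (\<forall>x y. st (x + y) = st x + st y) \<and>
     (\<forall>a x. st (smul a x) = smul (cnj a) (st x)) \<and>
     (\<forall>x y. st (x * y) = st y * st x)"

definition is_state :: "(complex \<Rightarrow> 'a::ring_1 \<Rightarrow> 'a) \<Rightarrow> ('a \<Rightarrow> 'a) \<Rightarrow> ('a \<Rightarrow> complex) \<Rightarrow> bool" where
  "is_state smul st \<phi> \<longleftrightarrow>
     (\<forall>x y. \<phi> (x + y) = \<phi> x + \<phi> y) \<and>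
     (\<forall>a x. \<phi> (smul a x) = a * \<phi> x) \<and>
     (\<forall>x. Im (\<phi> (st x * x)) = 0 \<and> Re (\<phi> (st x * x)) \<ge> 0) \<and>
     \<phi> 1 = 1"

definition phinorm :: "('a::ring_1 \<Rightarrow> 'a) \<Rightarrow> ('a \<Rightarrow> complex) \<Rightarrow> 'a \<Rightarrow> real" where
  "phinorm st \<phi> A = sqrt (Re (\<phi> (st A * A)))"

definition star_dynamical_system ::
  "(complex \<Rightarrow> 'a::ring_1 \<Rightarrow> 'a) \<Rightarrow> ('a \<Rightarrow> 'a) \<Rightarrow> ('a \<Rightarrow> complex) \<Rightarrow> ('a \<Rightarrow> 'a) \<Rightarrow> bool" where
  "star_dynamical_system smul st \<phi> \<tau> \<longleftrightarrow>
     star_algebra smul st \<and> is_state smul st \<phi> \<and>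
     (\<forall>x y. \<tau> (x + y) = \<tau> x + \<tau> y) \<and>
     (\<forall>a x. \<tau> (smul a x) = smul a (\<tau> x)) \<and>
     \<tau> 1 = 1 \<and>
     (\<forall>A. Re (\<phi> (st (\<tau> A) * \<tau> A)) \<le> Re (\<phi> (st A * A)))"

definition phi_cauchy :: "('a::ring_1 \<Rightarrow> 'a) \<Rightarrow> ('a \<Rightarrow> complex) \<Rightarrow> (nat \<Rightarrow> 'a) \<Rightarrow> bool" where
  "phi_cauchy st \<phi> X \<longleftrightarrow>
     (\<forall>\<epsilon>>0. \<exists>N. \<forall>m n. m > N \<and> n > N \<longrightarrow> phinorm st \<phi> (X m - X n) \<le> \<epsilon>)"

definition ergodic ::
  "(complex \<Rightarrow> 'a::ring_1 \<Rightarrow> 'a) \<Rightarrow> ('a \<Rightarrow> 'a) \<Rightarrow> ('a \<Rightarrow> complex) \<Rightarrow> ('a \<Rightarrow> 'a) \<Rightarrow> bool" where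
  "ergodic smul st \<phi> \<tau> \<longleftrightarrow>
     (\<forall>X. (\<lambda>n. phinorm st \<phi> (\<tau> (X n) - X n)) \<longlonglongrightarrow> 0 \<and> phi_cauchy st \<phi> X \<longrightarrow>
        (\<exists>\<alpha>. (\<lambda>n. phinorm st \<phi> (X n - smul \<alpha> 1)) \<longlonglongrightarrow> 0))"

definition lin_span :: "(complex \<Rightarrow> 'a::ring_1 \<Rightarrow> 'a) \<Rightarrow> 'a set \<Rightarrow> 'a set" where
  "lin_span smul S = {B. \<exists>F c. finite F \<and> F \<subseteq> S \<and> B = (\<Sum>s\<in>F. smul (c s) s)}"

definition phi_total ::
  "(complex \<Rightarrow> 'a::ring_1 \<Rightarrow> 'a) \<Rightarrow> ('a \<Rightarrow> 'a) \<Rightarrow> ('a \<Rightarrow> complex) \<Rightarrow> 'a set \<Rightarrow> bool" where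
  "phi_total smul st \<phi> S \<longleftrightarrow>
     (\<forall>A. \<forall>\<epsilon>>0. \<exists>B\<in>lin_span smul S. phinorm st \<phi> (A - B) < \<epsilon>)"

end

theory Submission
  imports Defs
begin

text \<open>
  Everything happens in the GNS semi-inner product \<open>\<langle>x, y\<rangle> = \<phi>(x\<^sup>* y)\<close>, for which \<open>\<tau>\<close> is a
  contraction fixing \<open>1\<close>, hence \<open>\<phi> \<circ> \<tau> = \<phi>\<close>.

  (i) Take a minimizing sequence for the distance from \<open>B\<close> to the coboundaries \<open>w - \<tau> w\<close>.
  By the parallelogram law it is \<open>\<phi>\<close>-Cauchy, and by a first-variation argument it is
  asymptotically invariant; ergodicity makes it converge to a constant. So \<open>B\<close> is approximated
  by constants plus coboundaries, on which the averages telescope, and the averages are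
  uniformly continuous in \<open>B\<close>.

  (ii) The averages are sesquilinear and bounded by \<open>\<parallel>A\<parallel>\<^sub>\<phi> \<parallel>B\<parallel>\<^sub>\<phi>\<close>, so convergence passes from
  \<open>\<SS>\<^sup>* \<times> \<TT>\<close> to all pairs. If \<open>X\<^sub>n\<close> is Cauchy and asymptotically invariant, then for large \<open>m\<close> all
  iterates of \<open>X\<^sub>m\<close> stay \<open>2\<epsilon>\<close>-close to \<open>X\<^sub>m\<close>; averaging \<open>\<langle>X\<^sub>m - \<phi>(X\<^sub>m), \<tau>\<^sup>k X\<^sub>m\<rangle>\<close> then shows
  that \<open>X\<^sub>m\<close> is \<open>2\<epsilon>\<close>-close to the constant \<open>\<phi>(X\<^sub>m)\<close>, and the scalars \<open>\<phi>(X\<^sub>m)\<close> converge.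
\<close>

lemma quadratic_nonneg_discriminant:
  fixes a b c :: real
  assumes c: "c \<ge> 0" and nonneg: "\<And>t. 0 \<le> a + 2 * b * t + c * t\<^sup>2"
  shows "b\<^sup>2 \<le> a * c"
proof (cases "c = 0")
  case True
  have "b = 0"
  proof (rule ccontr)
    assume "b \<noteq> 0"
    then have "a + 2 * b * (- (a + 1) / (2 * b)) = -1" by (simp add: field_simps)
    then show False using nonneg[of "- (a + 1) / (2 * b)"] True by simp
  qed
  then show ?thesis using True by simp
next
  case False
  with c have "c > 0" by simp
  have "a + 2 * b * (- b / c) + c * (- b / c)\<^sup>2 = a - b\<^sup>2 / c"
    using \<open>c > 0\<close> by (simp add: field_simps power2_eq_square)
  with nonneg[of "- b / c"] have "b\<^sup>2 / c \<le> a" by simp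
  with \<open>c > 0\<close> show ?thesis by (simp add: pos_divide_le_eq)
qed

lemma norm_average_le:
  fixes f :: "nat \<Rightarrow> complex"
  assumes "\<And>k. k < n \<Longrightarrow> cmod (f k) \<le> M" and "0 \<le> M"
  shows "cmod ((\<Sum>k<n. f k) / of_nat n) \<le> M"
proof (cases "n = 0")
  case False
  have "cmod (\<Sum>k<n. f k) \<le> (\<Sum>k<n. M)"
    using assms(1) by (intro order_trans[OF norm_sum] sum_mono) simp
  with False show ?thesis by (simp add: norm_divide field_simps)
qed (simp add: assms(2))

locale star_algebra_state =
  fixes smul :: "complex \<Rightarrow> 'a::ring_1 \<Rightarrow> 'a" and st :: "'a \<Rightarrow> 'a" and \<phi> :: "'a \<Rightarrow> complex"
  assumes star_algebra: "star_algebra smul st" and state: "is_state smul st \<phi>"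
begin

lemma smul_mult_left: "smul a (x * y) = smul a x * y"
  and smul_mult_right: "smul a (x * y) = x * smul a y"
  and st_st [simp]: "st (st x) = x"
  and st_smul: "st (smul a x) = smul (cnj a) (st x)"
  and st_mult: "st (x * y) = st y * st x"
  and phi_smul: "\<phi> (smul a x) = a * \<phi> x"
  and phi_st_mult_self: "Im (\<phi> (st x * x)) = 0 \<and> 0 \<le> Re (\<phi> (st x * x))"
  and phi_one [simp]: "\<phi> 1 = 1"
  using star_algebra state unfolding star_algebra_def is_state_def by auto

sublocale module smul
  using star_algebra unfolding star_algebra_def by unfold_locales auto

sublocale st: additive st
  using star_algebra unfolding star_algebra_def by unfold_locales auto

sublocale phi: additive \<phi>
  using state unfolding is_state_def by unfold_locales auto

lemma lin_span_eq_span: "lin_span smul S = span S"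
  unfolding lin_span_def span_explicit by blast

lemma st_one [simp]: "st 1 = 1"
  using st_mult[of "st 1" 1] by simp

definition gns_inner :: "'a \<Rightarrow> 'a \<Rightarrow> complex" where
  "gns_inner x y = \<phi> (st x * y)"

definition sqnorm :: "'a \<Rightarrow> real" where
  "sqnorm x = Re (gns_inner x x)"

abbreviation nrm :: "'a \<Rightarrow> real" where
  "nrm \<equiv> phinorm st \<phi>"

lemma gns_inner_add_left: "gns_inner (x + y) z = gns_inner x z + gns_inner y z"
  and gns_inner_add_right: "gns_inner x (y + z) = gns_inner x y + gns_inner x z"
  and gns_inner_diff_left: "gns_inner (x - y) z = gns_inner x z - gns_inner y z"
  and gns_inner_diff_right: "gns_inner x (y - z) = gns_inner x y - gns_inner x z"
  and gns_inner_smul_left: "gns_inner (smul a x) y = cnj a * gns_inner x y"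
  and gns_inner_smul_right: "gns_inner x (smul a y) = a * gns_inner x y"
  and gns_inner_one_left: "gns_inner 1 x = \<phi> x"
  by (simp_all add: gns_inner_def st.add st.diff phi.add phi.diff
      distrib_left distrib_right left_diff_distrib right_diff_distrib st_smul phi_smul
      smul_mult_left[symmetric] smul_mult_right[symmetric])

lemma gns_inner_self: "gns_inner x x = of_real (sqnorm x)"
  using phi_st_mult_self[of x] by (simp add: sqnorm_def gns_inner_def complex_eq_iff)

lemma sqnorm_nonneg: "sqnorm x \<ge> 0"
  using phi_st_mult_self[of x] by (simp add: sqnorm_def gns_inner_def)

lemma gns_inner_commute: "gns_inner y x = cnj (gns_inner x y)"
proof -
  have "Im (gns_inner x y) + Im (gns_inner y x) = 0"
    using gns_inner_self[of "x + y"] gns_inner_self[of x] gns_inner_self[of y]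
    by (simp add: gns_inner_add_left gns_inner_add_right complex_eq_iff)
  moreover have "Re (gns_inner x y) - Re (gns_inner y x) = 0"
    using gns_inner_self[of "x + smul \<i> y"] gns_inner_self[of x] gns_inner_self[of y]
    by (simp add: gns_inner_add_left gns_inner_add_right gns_inner_smul_left
        gns_inner_smul_right complex_eq_iff)
  ultimately show ?thesis by (simp add: complex_eq_iff)
qed

lemma sqnorm_add: "sqnorm (x + y) = sqnorm x + 2 * Re (gns_inner x y) + sqnorm y"
  and sqnorm_diff: "sqnorm (x - y) = sqnorm x - 2 * Re (gns_inner x y) + sqnorm y"
  using gns_inner_commute[of x y]
  by (simp_all add: sqnorm_def gns_inner_add_left gns_inner_add_right
      gns_inner_diff_left gns_inner_diff_right)

lemma sqnorm_smul: "sqnorm (smul c x) = (cmod c)\<^sup>2 * sqnorm x"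
proof -
  have "gns_inner (smul c x) (smul c x) = (c * cnj c) * gns_inner x x"
    by (simp add: gns_inner_smul_left gns_inner_smul_right)
  then show ?thesis
    by (simp add: sqnorm_def complex_norm_square[symmetric])
qed

lemma sqnorm_one [simp]: "sqnorm 1 = 1"
  by (simp add: sqnorm_def gns_inner_one_left)

lemma gns_inner_one_right: "gns_inner x 1 = cnj (\<phi> x)"
  using gns_inner_commute[of 1 x] by (simp add: gns_inner_one_left)

lemma phi_st: "\<phi> (st x) = cnj (\<phi> x)"
  using gns_inner_one_right[of x] by (simp add: gns_inner_def)

lemma nrm_eq_sqrt_sqnorm: "nrm x = sqrt (sqnorm x)"
  by (simp add: phinorm_def sqnorm_def gns_inner_def)

lemma nrm_nonneg: "nrm x \<ge> 0"
  by (simp add: nrm_eq_sqrt_sqnorm sqnorm_nonneg)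

lemma nrm_power2: "(nrm x)\<^sup>2 = sqnorm x"
  by (simp add: nrm_eq_sqrt_sqnorm sqnorm_nonneg)

lemma gns_inner_cauchy_schwarz: "cmod (gns_inner x y) \<le> nrm x * nrm y"
proof -
  define c where "c = gns_inner x y"
  have "0 \<le> sqnorm x + 2 * - (cmod c)\<^sup>2 * t + (cmod c)\<^sup>2 * sqnorm y * t\<^sup>2" for t
  proof -
    have "cnj c * c = of_real ((cmod c)\<^sup>2)"
      by (simp add: complex_norm_square[symmetric] mult.commute)
    then have "Re (gns_inner x (smul (of_real t * cnj c) y)) = t * (cmod c)\<^sup>2"
      by (simp add: gns_inner_smul_right c_def[symmetric] mult.assoc)
    moreover have "(cmod (of_real t * cnj c))\<^sup>2 = t\<^sup>2 * (cmod c)\<^sup>2"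
      by (simp add: norm_mult power_mult_distrib)
    ultimately have "sqnorm (x - smul (of_real t * cnj c) y)
        = sqnorm x - 2 * t * (cmod c)\<^sup>2 + t\<^sup>2 * (cmod c)\<^sup>2 * sqnorm y"
      by (simp add: sqnorm_diff sqnorm_smul)
    then show ?thesis using sqnorm_nonneg[of "x - smul (of_real t * cnj c) y"]
      by (simp add: algebra_simps)
  qed
  then have "((cmod c)\<^sup>2)\<^sup>2 \<le> sqnorm x * ((cmod c)\<^sup>2 * sqnorm y)"
    using quadratic_nonneg_discriminant[where a = "sqnorm x" and b = "- (cmod c)\<^sup>2"
        and c = "(cmod c)\<^sup>2 * sqnorm y"]
    by (simp add: sqnorm_nonneg)
  then have "(cmod c)\<^sup>2 \<le> sqnorm x * sqnorm y"
    by (cases "c = 0") (simp_all add: power2_eq_square algebra_simps sqnorm_nonneg)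
  then show ?thesis
    unfolding nrm_eq_sqrt_sqnorm real_sqrt_mult[symmetric] c_def by (rule real_le_rsqrt)
qed

lemma nrm_triangle: "nrm (x + y) \<le> nrm x + nrm y"
proof -
  have "Re (gns_inner x y) \<le> nrm x * nrm y"
    using complex_Re_le_cmod[of "gns_inner x y"] gns_inner_cauchy_schwarz[of x y] by linarith
  then have "sqnorm (x + y) \<le> (nrm x + nrm y)\<^sup>2"
    by (simp add: sqnorm_add power2_sum nrm_power2)
  then show ?thesis
    unfolding nrm_eq_sqrt_sqnorm[of "x + y"] by (simp add: real_le_lsqrt nrm_nonneg)
qed

lemma nrm_smul: "nrm (smul c x) = cmod c * nrm x"
  by (simp add: nrm_eq_sqrt_sqnorm sqnorm_smul real_sqrt_mult)

lemma nrm_minus: "nrm (- x) = nrm x"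
  using nrm_smul[of "-1" x] by simp

lemma nrm_minus_commute: "nrm (x - y) = nrm (y - x)"
  using nrm_minus[of "x - y"] by simp

lemma nrm_zero [simp]: "nrm 0 = 0"
  by (simp add: phinorm_def phi.zero)

lemma nrm_one [simp]: "nrm 1 = 1"
  by (simp add: nrm_eq_sqrt_sqnorm)

lemma cmod_phi_le_nrm: "cmod (\<phi> x) \<le> nrm x"
  using gns_inner_cauchy_schwarz[of 1 x] by (simp add: gns_inner_one_left)

lemma Cauchy_phi_if_phi_cauchy:
  assumes "phi_cauchy st \<phi> X"
  shows "Cauchy (\<lambda>n. \<phi> (X n))"
proof (rule CauchyI)
  fix e :: real assume "e > 0"
  then obtain N where N: "\<And>m n. m > N \<Longrightarrow> n > N \<Longrightarrow> nrm (X m - X n) \<le> e / 2"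
    using assms unfolding phi_cauchy_def by (meson half_gt_zero)
  have "cmod (\<phi> (X m) - \<phi> (X n)) < e" if "m \<ge> Suc N" "n \<ge> Suc N" for m n
    using cmod_phi_le_nrm[of "X m - X n"] N[of m n] that \<open>e > 0\<close> by (simp add: phi.diff)
  then show "\<exists>M. \<forall>m\<ge>M. \<forall>n\<ge>M. cmod (\<phi> (X m) - \<phi> (X n)) < e" by blast
qed

lemma phi_cauchy_if_sqnorm_diff_le:
  assumes bound: "\<And>m n. sqnorm (X m - X n) \<le> e m + e n" and "e \<longlonglongrightarrow> 0"
  shows "phi_cauchy st \<phi> X"
  unfolding phi_cauchy_def
proof (intro allI impI)
  fix \<epsilon> :: real assume "\<epsilon> > 0"
  then obtain N where N: "\<And>n. n \<ge> N \<Longrightarrow> \<bar>e n\<bar> < \<epsilon>\<^sup>2 / 2"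
    using LIMSEQ_D[OF \<open>e \<longlonglongrightarrow> 0\<close>, of "\<epsilon>\<^sup>2 / 2"] by auto
  have "nrm (X m - X n) \<le> \<epsilon>" if "m > N" "n > N" for m n
  proof -
    have "sqnorm (X m - X n) \<le> \<epsilon>\<^sup>2"
      using bound[of m n] N[of m] N[of n] that by linarith
    with \<open>\<epsilon> > 0\<close> show ?thesis
      by (simp add: nrm_eq_sqrt_sqnorm real_le_lsqrt)
  qed
  then show "\<exists>N. \<forall>m n. N < m \<and> N < n \<longrightarrow> nrm (X m - X n) \<le> \<epsilon>" by blast
qed

lemma converges_to_constant_if_phi_cauchy:
  assumes "phi_cauchy st \<phi> X" and "(\<lambda>n. nrm (X n - smul (\<phi> (X n)) 1)) \<longlonglongrightarrow> 0"
  shows "\<exists>\<alpha>. (\<lambda>n. nrm (X n - smul \<alpha> 1)) \<longlonglongrightarrow> 0"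
proof -
  obtain \<alpha> where \<alpha>: "(\<lambda>n. \<phi> (X n)) \<longlonglongrightarrow> \<alpha>"
    using Cauchy_phi_if_phi_cauchy[OF assms(1)] by (auto simp: Cauchy_convergent_iff convergent_def)
  have "nrm (X n - smul \<alpha> 1) \<le> nrm (X n - smul (\<phi> (X n)) 1) + cmod (\<phi> (X n) - \<alpha>)" for n
  proof -
    have decomp: "X n - smul \<alpha> 1 = (X n - smul (\<phi> (X n)) 1) + smul (\<phi> (X n) - \<alpha>) 1"
      by (simp add: scale_left_diff_distrib)
    have "nrm (X n - smul \<alpha> 1) \<le> nrm (X n - smul (\<phi> (X n)) 1) + nrm (smul (\<phi> (X n) - \<alpha>) 1)"
      unfolding decomp by (rule nrm_triangle)
    then show ?thesis by (simp add: nrm_smul)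
  qed
  note bound = this
  have "(\<lambda>n. cmod (\<phi> (X n) - \<alpha>)) \<longlonglongrightarrow> 0"
    using \<alpha> by (intro tendsto_norm_zero LIM_zero)
  with assms(2) have lim: "(\<lambda>n. nrm (X n - smul (\<phi> (X n)) 1) + cmod (\<phi> (X n) - \<alpha>)) \<longlonglongrightarrow> 0"
    by (rule tendsto_add_zero)
  show ?thesis
  proof (intro exI[of _ \<alpha>] tendsto_sandwich[OF _ _ tendsto_const lim])
    show "\<forall>\<^sub>F n in sequentially. 0 \<le> nrm (X n - smul \<alpha> 1)"
      by (simp add: nrm_nonneg)
    show "\<forall>\<^sub>F n in sequentially. nrm (X n - smul \<alpha> 1)
        \<le> nrm (X n - smul (\<phi> (X n)) 1) + cmod (\<phi> (X n) - \<alpha>)"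
      using bound by simp
  qed
qed

lemma cmod_phi_prod_diff_left_le:
  "cmod (cnj (\<phi> y) * \<phi> b - cnj (\<phi> y') * \<phi> b) \<le> nrm b * nrm (y - y')"
proof -
  have "cnj (\<phi> y) * \<phi> b - cnj (\<phi> y') * \<phi> b = cnj (\<phi> (y - y')) * \<phi> b"
    by (simp add: phi.diff algebra_simps)
  then show ?thesis
    by (simp add: norm_mult mult_mono cmod_phi_le_nrm nrm_nonneg mult.commute[of "nrm b"])
qed

lemma cmod_phi_prod_diff_right_le:
  "cmod (cnj (\<phi> y) * \<phi> b - cnj (\<phi> y) * \<phi> b') \<le> nrm y * nrm (b - b')"
proof -
  have "cnj (\<phi> y) * \<phi> b - cnj (\<phi> y) * \<phi> b' = cnj (\<phi> y) * \<phi> (b - b')"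
    by (simp add: phi.diff algebra_simps)
  then show ?thesis by (simp add: norm_mult mult_mono cmod_phi_le_nrm nrm_nonneg)
qed

lemma tendsto_if_dense:
  fixes F :: "'a \<Rightarrow> nat \<Rightarrow> complex" and L :: "'a \<Rightarrow> complex"
  assumes dense: "\<And>\<epsilon>. \<epsilon> > 0 \<Longrightarrow> \<exists>v\<in>D. nrm (u - v) < \<epsilon>"
    and tendsto_D: "\<And>v. v \<in> D \<Longrightarrow> F v \<longlonglongrightarrow> L v"
    and F_lipschitz: "\<And>v n. cmod (F u n - F v n) \<le> K * nrm (u - v)"
    and L_lipschitz: "\<And>v. cmod (L u - L v) \<le> K * nrm (u - v)"
  shows "F u \<longlonglongrightarrow> L u"
proof (rule LIMSEQ_I)
  fix r :: real assume "r > 0"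
  then have "r / (3 * (\<bar>K\<bar> + 1)) > 0"
    by (simp add: add_nonneg_pos)
  then obtain v where v: "v \<in> D" "nrm (u - v) < r / (3 * (\<bar>K\<bar> + 1))"
    using dense by blast
  have "K * nrm (u - v) \<le> (\<bar>K\<bar> + 1) * nrm (u - v)"
    by (intro mult_right_mono) (simp_all add: nrm_nonneg)
  also have "\<dots> < r / 3"
    using v(2) by (simp add: field_simps add_nonneg_pos)
  finally have close: "K * nrm (u - v) < r / 3" .
  obtain N where N: "\<And>n. n \<ge> N \<Longrightarrow> cmod (F v n - L v) < r / 3"
    using LIMSEQ_D[OF tendsto_D[OF v(1)], of "r / 3"] \<open>r > 0\<close> by auto
  have "cmod (F u n - L u) < r" if "n \<ge> N" for n
  proof -
    have "F u n - L u = (F u n - F v n) + (F v n - L v) - (L u - L v)"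
      by simp
    then have "cmod (F u n - L u) \<le> cmod (F u n - F v n) + cmod (F v n - L v) + cmod (L u - L v)"
      by (metis norm_triangle_ineq norm_triangle_ineq4 add_right_mono order_trans)
    then show ?thesis
      using F_lipschitz[where v = v and n = n] L_lipschitz[where v = v] N[OF that] close
      by linarith
  qed
  then show "\<exists>N. \<forall>n\<ge>N. cmod (F u n - L u) < r" by blast
qed

end

locale star_dynamics =
  fixes smul :: "complex \<Rightarrow> 'a::ring_1 \<Rightarrow> 'a" and st :: "'a \<Rightarrow> 'a" and \<phi> :: "'a \<Rightarrow> complex"
    and \<tau> :: "'a \<Rightarrow> 'a"
  assumes dynamical_system: "star_dynamical_system smul st \<phi> \<tau>"
begin

sublocale star_algebra_state smul st \<phi>
  using dynamical_system unfolding star_dynamical_system_def by unfold_locales auto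

lemma tau_smul: "\<tau> (smul a x) = smul a (\<tau> x)"
  and tau_one [simp]: "\<tau> 1 = 1"
  and sqnorm_tau_le: "sqnorm (\<tau> x) \<le> sqnorm x"
  using dynamical_system
  by (auto simp: star_dynamical_system_def sqnorm_def gns_inner_def)

sublocale tau: additive \<tau>
  using dynamical_system unfolding star_dynamical_system_def by unfold_locales auto

sublocale tau_pow: additive "\<tau> ^^ k" for k
  by unfold_locales (induction k, simp_all add: tau.add)

lemma tau_pow_smul: "(\<tau> ^^ k) (smul a x) = smul a ((\<tau> ^^ k) x)"
  and tau_pow_one [simp]: "(\<tau> ^^ k) 1 = 1"
  by (induction k) (simp_all add: tau_smul)

lemma nrm_tau_pow_le: "nrm ((\<tau> ^^ k) x) \<le> nrm x"
proof (induction k)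
  case (Suc k)
  have "nrm (\<tau> ((\<tau> ^^ k) x)) \<le> nrm ((\<tau> ^^ k) x)"
    by (simp add: nrm_eq_sqrt_sqnorm sqnorm_tau_le)
  with Suc show ?case by simp
qed simp

lemma nrm_tau_pow_diff_le: "nrm ((\<tau> ^^ k) x - x) \<le> real k * nrm (\<tau> x - x)"
proof (induction k)
  case (Suc k)
  have "(\<tau> ^^ Suc k) x - x = (\<tau> ^^ k) (\<tau> x - x) + ((\<tau> ^^ k) x - x)"
    by (simp add: tau_pow.diff funpow_swap1)
  then have "nrm ((\<tau> ^^ Suc k) x - x) \<le> nrm ((\<tau> ^^ k) (\<tau> x - x)) + nrm ((\<tau> ^^ k) x - x)"
    by (metis nrm_triangle)
  with Suc nrm_tau_pow_le[of k "\<tau> x - x"] show ?case by (simp add: algebra_simps)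
qed simp

text \<open>Contractivity applied to \<open>1 + t w\<close> for all real \<open>t\<close> forces \<open>\<tau>\<close> to preserve the state.\<close>
lemma phi_tau [simp]: "\<phi> (\<tau> w) = \<phi> w"
proof -
  have Re_eq: "Re (\<phi> (\<tau> x)) = Re (\<phi> x)" for x
  proof -
    have sqnorm_one_plus: "sqnorm (1 + smul (of_real t) y) = 1 + 2 * t * Re (\<phi> y) + t\<^sup>2 * sqnorm y"
      for t y by (simp add: sqnorm_add gns_inner_smul_right gns_inner_one_left sqnorm_smul)
    have "0 \<le> 0 + 2 * (Re (\<phi> x) - Re (\<phi> (\<tau> x))) * t + (sqnorm x - sqnorm (\<tau> x)) * t\<^sup>2" for t
      using sqnorm_tau_le[of "1 + smul (of_real t) x"] sqnorm_one_plus[of t x]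
        sqnorm_one_plus[of t "\<tau> x"]
      by (simp add: tau.add tau_smul algebra_simps)
    then have "(Re (\<phi> x) - Re (\<phi> (\<tau> x)))\<^sup>2 \<le> 0"
      using quadratic_nonneg_discriminant[where a = 0 and b = "Re (\<phi> x) - Re (\<phi> (\<tau> x))"
          and c = "sqnorm x - sqnorm (\<tau> x)"] sqnorm_tau_le[of x]
      by simp
    then show ?thesis by simp
  qed
  have "Re (\<phi> (\<tau> (smul \<i> w))) = Re (\<phi> (smul \<i> w))" by (rule Re_eq)
  then have "Im (\<phi> (\<tau> w)) = Im (\<phi> w)"
    by (simp only: tau_smul phi_smul) simp
  with Re_eq[of w] show ?thesis by (simp add: complex_eq_iff)
qed

definition mean_corr :: "'a \<Rightarrow> 'a \<Rightarrow> nat \<Rightarrow> complex" where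
  "mean_corr y b n = (\<Sum>k<n. gns_inner y ((\<tau> ^^ k) b)) / of_nat n"

text \<open>The first argument plays the role of \<open>A\<^sup>*\<close>, which makes the averages sesquilinear.\<close>
definition clusters_in_mean :: "'a \<Rightarrow> 'a \<Rightarrow> bool" where
  "clusters_in_mean y b \<longleftrightarrow> mean_corr y b \<longlonglongrightarrow> cnj (\<phi> y) * \<phi> b"

lemma clusters_in_mean_st_iff:
  "clusters_in_mean (st A) B \<longleftrightarrow>
     (\<lambda>n. (\<Sum>k<n. \<phi> (A * (\<tau> ^^ k) B)) / of_nat n) \<longlonglongrightarrow> \<phi> A * \<phi> B"
  unfolding clusters_in_mean_def mean_corr_def[abs_def] gns_inner_def by (simp add: phi_st)

lemma mean_corr_add_left: "mean_corr (x + y) b n = mean_corr x b n + mean_corr y b n"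
  and mean_corr_add_right: "mean_corr y (a + b) n = mean_corr y a n + mean_corr y b n"
  and mean_corr_diff_left: "mean_corr (x - y) b n = mean_corr x b n - mean_corr y b n"
  and mean_corr_diff_right: "mean_corr y (a - b) n = mean_corr y a n - mean_corr y b n"
  and mean_corr_smul_left: "mean_corr (smul c y) b n = cnj c * mean_corr y b n"
  and mean_corr_smul_right: "mean_corr y (smul c b) n = c * mean_corr y b n"
  by (simp_all add: mean_corr_def gns_inner_add_left gns_inner_add_right gns_inner_diff_left
      gns_inner_diff_right gns_inner_smul_left gns_inner_smul_right tau_pow.add tau_pow.diff
      tau_pow_smul sum.distrib sum_subtractf add_divide_distrib diff_divide_distrib
      sum_distrib_left[symmetric])

lemma norm_mean_corr_le: "cmod (mean_corr y b n) \<le> nrm y * nrm b"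
  unfolding mean_corr_def
  by (intro norm_average_le order_trans[OF gns_inner_cauchy_schwarz] mult_left_mono
      nrm_tau_pow_le nrm_nonneg mult_nonneg_nonneg)

lemma clusters_in_mean_span:
  assumes "\<forall>s\<in>S. \<forall>b\<in>T. clusters_in_mean s b" and "y \<in> span S" and "b \<in> span T"
  shows "clusters_in_mean y b"
proof -
  have lin_left: "clusters_in_mean (smul c x + y) b"
    if "clusters_in_mean x b" "clusters_in_mean y b" for c x y b
  proof -
    have "mean_corr (smul c x + y) b = (\<lambda>n. cnj c * mean_corr x b n + mean_corr y b n)"
      by (simp add: fun_eq_iff mean_corr_add_left mean_corr_smul_left)
    with that show ?thesis
      unfolding clusters_in_mean_def
      by (auto intro!: tendsto_eq_intros simp: phi.add phi_smul algebra_simps)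
  qed
  have lin_right: "clusters_in_mean y (smul c x + b)"
    if "clusters_in_mean y x" "clusters_in_mean y b" for c x y b
  proof -
    have "mean_corr y (smul c x + b) = (\<lambda>n. c * mean_corr y x n + mean_corr y b n)"
      by (simp add: fun_eq_iff mean_corr_add_right mean_corr_smul_right)
    with that show ?thesis
      unfolding clusters_in_mean_def
      by (auto intro!: tendsto_eq_intros simp: phi.add phi_smul algebra_simps)
  qed
  have zero_left: "clusters_in_mean 0 b" and zero_right: "clusters_in_mean y 0" for y b
    by (simp_all add: clusters_in_mean_def mean_corr_def[abs_def] gns_inner_def phi.zero st.zero
        tau_pow.zero)
  from \<open>b \<in> span T\<close> have "\<forall>s\<in>S. clusters_in_mean s b"
    by (induction rule: span_induct_alt) (use assms(1) zero_right lin_right in auto)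
  with \<open>y \<in> span S\<close> show ?thesis
    by (induction rule: span_induct_alt) (use zero_left lin_left in auto)
qed

lemma clusters_in_mean_if_total:
  assumes S: "phi_total smul st \<phi> S" and T: "phi_total smul st \<phi> T"
    and clusters: "\<forall>s\<in>S. \<forall>b\<in>T. clusters_in_mean s b"
  shows "clusters_in_mean y b"
proof -
  have span_T: "clusters_in_mean y b'" if "b' \<in> span T" for b'
    unfolding clusters_in_mean_def
  proof (rule tendsto_if_dense[where F = "\<lambda>y. mean_corr y b'" and L = "\<lambda>y. cnj (\<phi> y) * \<phi> b'"
        and D = "span S" and K = "nrm b'"])
    show "\<exists>v\<in>span S. nrm (y - v) < \<epsilon>" if "\<epsilon> > 0" for \<epsilon>
      using S that by (simp add: phi_total_def lin_span_eq_span)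
    show "mean_corr v b' \<longlonglongrightarrow> cnj (\<phi> v) * \<phi> b'" if "v \<in> span S" for v
      using clusters_in_mean_span[OF clusters that \<open>b' \<in> span T\<close>] by (simp add: clusters_in_mean_def)
    show "cmod (mean_corr y b' n - mean_corr v b' n) \<le> nrm b' * nrm (y - v)" for v n
      using norm_mean_corr_le[of "y - v" b' n] by (simp add: mean_corr_diff_left mult.commute)
  qed (rule cmod_phi_prod_diff_left_le)
  show ?thesis
    unfolding clusters_in_mean_def
  proof (rule tendsto_if_dense[where F = "mean_corr y" and L = "\<lambda>b. cnj (\<phi> y) * \<phi> b"
        and D = "span T" and K = "nrm y"])
    show "\<exists>v\<in>span T. nrm (b - v) < \<epsilon>" if "\<epsilon> > 0" for \<epsilon>
      using T that by (simp add: phi_total_def lin_span_eq_span)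
    show "cmod (mean_corr y b n - mean_corr y v n) \<le> nrm y * nrm (b - v)" for v n
      using norm_mean_corr_le[of y "b - v" n] by (simp add: mean_corr_diff_right)
    show "mean_corr y v \<longlonglongrightarrow> cnj (\<phi> y) * \<phi> v" if "v \<in> span T" for v
      using span_T[OF that] by (simp add: clusters_in_mean_def)
  qed (rule cmod_phi_prod_diff_right_le)
qed

text \<open>The averages of \<open>\<langle>y, \<tau>\<^sup>k x\<rangle>\<close> with \<open>y = x - \<phi>(x)\<close> tend to \<open>0\<close> by clustering
  and stay within \<open>\<parallel>y\<parallel> \<delta>\<close> of \<open>\<langle>y, x\<rangle> = \<parallel>y\<parallel>\<^sup>2\<close>.\<close>
lemma nrm_sub_phi_le_if_almost_invariant:
  assumes clusters: "clusters_in_mean (x - smul (\<phi> x) 1) x"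
    and almost_invariant: "\<And>k. nrm ((\<tau> ^^ k) x - x) \<le> \<delta>"
  shows "nrm (x - smul (\<phi> x) 1) \<le> \<delta>"
proof -
  define y where "y = x - smul (\<phi> x) 1"
  have "\<delta> \<ge> 0" using almost_invariant[of 0] by simp
  have "\<phi> y = 0" by (simp add: y_def phi.diff phi_smul)
  have "x = y + smul (\<phi> x) 1" by (simp add: y_def)
  then have "gns_inner y x = gns_inner y y + \<phi> x * gns_inner y 1"
    by (metis gns_inner_add_right gns_inner_smul_right)
  with \<open>\<phi> y = 0\<close> have inner_eq: "gns_inner y x = of_real (sqnorm y)"
    by (simp add: gns_inner_self gns_inner_one_right)
  have "cmod (mean_corr y x n - gns_inner y x) \<le> nrm y * \<delta>" if "n > 0" for n
  proof -
    have "mean_corr y x n - gns_inner y x = (\<Sum>k<n. gns_inner y ((\<tau> ^^ k) x - x)) / of_nat n"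
      using \<open>n > 0\<close> by (simp add: mean_corr_def gns_inner_diff_right sum_subtractf diff_divide_distrib)
    also have "cmod \<dots> \<le> nrm y * \<delta>"
      by (intro norm_average_le order_trans[OF gns_inner_cauchy_schwarz] mult_left_mono
          almost_invariant nrm_nonneg mult_nonneg_nonneg \<open>\<delta> \<ge> 0\<close>)
    finally show ?thesis .
  qed
  moreover have "(\<lambda>n. mean_corr y x n - gns_inner y x) \<longlonglongrightarrow> 0 - gns_inner y x"
    using clusters \<open>\<phi> y = 0\<close> unfolding clusters_in_mean_def y_def[symmetric]
    by (intro tendsto_diff) simp_all
  then have "(\<lambda>n. cmod (mean_corr y x n - gns_inner y x)) \<longlonglongrightarrow> cmod (gns_inner y x)"
    using tendsto_norm by fastforce
  ultimately have "cmod (gns_inner y x) \<le> nrm y * \<delta>"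
    by (intro tendsto_upperbound[where F = sequentially]) (auto simp: eventually_at_top_linorder intro!: exI[of _ 1])
  then have "sqnorm y \<le> nrm y * \<delta>"
    by (simp add: inner_eq sqnorm_nonneg)
  then have "nrm y * nrm y \<le> nrm y * \<delta>"
    by (simp add: nrm_power2[symmetric] power2_eq_square)
  then show ?thesis
    using \<open>\<delta> \<ge> 0\<close> nrm_nonneg[of y] unfolding y_def[symmetric]
    by (cases "nrm y = 0") (simp_all add: mult_le_cancel_left)
qed

lemma nrm_tau_pow_diff_le_if_near_almost_invariant:
  assumes invariant: "(\<lambda>n. nrm (\<tau> (X n) - X n)) \<longlonglongrightarrow> 0"
    and near: "\<forall>\<^sub>F n in sequentially. nrm (x - X n) \<le> \<epsilon>"
  shows "nrm ((\<tau> ^^ k) x - x) \<le> 2 * \<epsilon>"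
proof (rule tendsto_lowerbound)
  show "(\<lambda>n. 2 * \<epsilon> + real k * nrm (\<tau> (X n) - X n)) \<longlonglongrightarrow> 2 * \<epsilon>"
    using invariant by (auto intro!: tendsto_eq_intros)
  show "\<forall>\<^sub>F n in sequentially. nrm ((\<tau> ^^ k) x - x) \<le> 2 * \<epsilon> + real k * nrm (\<tau> (X n) - X n)"
    using near
  proof eventually_elim
    case (elim n)
    have decomp: "(\<tau> ^^ k) x - x = ((\<tau> ^^ k) (x - X n) + ((\<tau> ^^ k) (X n) - X n)) + (X n - x)"
      by (simp add: tau_pow.diff)
    have "nrm ((\<tau> ^^ k) x - x)
        \<le> nrm ((\<tau> ^^ k) (x - X n)) + nrm ((\<tau> ^^ k) (X n) - X n) + nrm (X n - x)"
      unfolding decomp by (meson nrm_triangle add_right_mono order_trans)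
    then show ?case
      using elim nrm_tau_pow_le[of k "x - X n"] nrm_tau_pow_diff_le[of k "X n"]
        nrm_minus_commute[of "X n" x]
      by linarith
  qed
qed simp

lemma ergodic_if_clusters_in_mean:
  assumes clusters: "\<And>y b. clusters_in_mean y b"
  shows "ergodic smul st \<phi> \<tau>"
  unfolding ergodic_def
proof (intro allI impI, elim conjE)
  fix X assume invariant: "(\<lambda>n. nrm (\<tau> (X n) - X n)) \<longlonglongrightarrow> 0"
    and cauchy: "phi_cauchy st \<phi> X"
  have "(\<lambda>m. nrm (X m - smul (\<phi> (X m)) 1)) \<longlonglongrightarrow> 0"
  proof (rule LIMSEQ_I)
    fix r :: real assume "r > 0"
    then obtain N where N: "\<And>m n. m > N \<Longrightarrow> n > N \<Longrightarrow> nrm (X m - X n) \<le> r / 4"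
      using cauchy unfolding phi_cauchy_def by (metis zero_less_divide_iff zero_less_numeral)
    have "norm (nrm (X m - smul (\<phi> (X m)) 1)) < r" if "m > N" for m
    proof -
      have "\<forall>\<^sub>F n in sequentially. nrm (X m - X n) \<le> r / 4"
        using eventually_gt_at_top[of N] by eventually_elim (rule N[OF that])
      then have "nrm ((\<tau> ^^ k) (X m) - X m) \<le> 2 * (r / 4)" for k
        by (rule nrm_tau_pow_diff_le_if_near_almost_invariant[OF invariant])
      then have "nrm (X m - smul (\<phi> (X m)) 1) \<le> 2 * (r / 4)"
        by (rule nrm_sub_phi_le_if_almost_invariant[OF clusters])
      with \<open>r > 0\<close> show ?thesis by (simp add: nrm_nonneg)
    qed
    then show "\<exists>N. \<forall>m\<ge>N. norm (nrm (X m - smul (\<phi> (X m)) 1) - 0) < r"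
      by (auto intro!: exI[of _ "Suc N"])
  qed
  with cauchy show "\<exists>\<alpha>. (\<lambda>n. nrm (X n - smul \<alpha> 1)) \<longlonglongrightarrow> 0"
    by (rule converges_to_constant_if_phi_cauchy)
qed

lemma mean_corr_coboundary_tendsto_zero: "mean_corr y (w - \<tau> w) \<longlonglongrightarrow> 0"
proof (rule tendsto_0_le[OF lim_inverse_n, where K = "2 * nrm y * nrm w"])
  have "mean_corr y (w - \<tau> w) n = (gns_inner y w - gns_inner y ((\<tau> ^^ n) w)) * inverse (of_nat n)"
    for n
    using sum_lessThan_telescope'[of "\<lambda>k. gns_inner y ((\<tau> ^^ k) w)" n]
    by (simp add: mean_corr_def gns_inner_diff_right tau_pow.diff funpow_swap1 divide_inverse)
  moreover have "cmod (gns_inner y w - gns_inner y ((\<tau> ^^ n) w)) \<le> 2 * nrm y * nrm w" for n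
    using norm_triangle_ineq4[of "gns_inner y w" "gns_inner y ((\<tau> ^^ n) w)"]
      gns_inner_cauchy_schwarz[of y w] gns_inner_cauchy_schwarz[of y "(\<tau> ^^ n) w"]
      mult_left_mono[OF nrm_tau_pow_le[of n w] nrm_nonneg[of y]]
    by linarith
  ultimately show "\<forall>\<^sub>F n in sequentially.
      cmod (mean_corr y (w - \<tau> w) n) \<le> cmod (inverse (of_nat n :: complex)) * (2 * nrm y * nrm w)"
    by (simp add: norm_mult mult.commute mult_left_mono)
qed

lemma clusters_in_mean_const_plus_coboundary: "clusters_in_mean y (smul \<alpha> 1 + (w - \<tau> w))"
proof -
  have const: "mean_corr y (smul \<alpha> 1) n = \<alpha> * cnj (\<phi> y)" if "n > 0" for n
    using that by (simp add: mean_corr_def tau_pow_smul gns_inner_smul_right gns_inner_one_right)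
  have "\<forall>\<^sub>F n in sequentially.
      \<alpha> * cnj (\<phi> y) + mean_corr y (w - \<tau> w) n = mean_corr y (smul \<alpha> 1 + (w - \<tau> w)) n"
    using eventually_gt_at_top[of 0] by eventually_elim (simp add: const mean_corr_add_right)
  moreover have "(\<lambda>n. \<alpha> * cnj (\<phi> y) + mean_corr y (w - \<tau> w) n) \<longlonglongrightarrow> cnj (\<phi> y) * \<alpha>"
    using tendsto_add[OF tendsto_const mean_corr_coboundary_tendsto_zero] by (simp add: mult.commute)
  ultimately show ?thesis
    by (simp add: clusters_in_mean_def phi.add phi.diff phi_smul tendsto_cong)
qed

definition coboundary_sqdist :: "'a \<Rightarrow> real" where
  "coboundary_sqdist B = (INF w. sqnorm (B - (w - \<tau> w)))"

lemma bdd_below_coboundary_sqdist: "bdd_below (range (\<lambda>w. sqnorm (B - (w - \<tau> w))))"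
  by (rule bdd_belowI2[of _ 0]) (rule sqnorm_nonneg)

lemma coboundary_sqdist_le: "coboundary_sqdist B \<le> sqnorm (B - (w - \<tau> w))"
  unfolding coboundary_sqdist_def by (rule cINF_lower[OF bdd_below_coboundary_sqdist]) simp

lemma exists_almost_minimizer:
  assumes "\<delta> > 0"
  shows "\<exists>w. sqnorm (B - (w - \<tau> w)) < coboundary_sqdist B + \<delta>"
  using assms cInf_lessD[of "range (\<lambda>w. sqnorm (B - (w - \<tau> w)))" "coboundary_sqdist B + \<delta>"]
  by (auto simp: coboundary_sqdist_def)

text \<open>Parallelogram law, with the midpoint \<open>(v + w) / 2\<close> as competitor.\<close>
lemma sqnorm_diff_almost_minimizers_le:
  "sqnorm ((B - (v - \<tau> v)) - (B - (w - \<tau> w)))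
     \<le> 2 * (sqnorm (B - (v - \<tau> v)) - coboundary_sqdist B)
       + 2 * (sqnorm (B - (w - \<tau> w)) - coboundary_sqdist B)"
proof -
  define u where "u = smul (1 / 2) (v + w)"
  have "smul 2 u = v + w"
    by (simp add: u_def)
  then have "(B - (v - \<tau> v)) + (B - (w - \<tau> w)) = smul 2 (B - (u - \<tau> u))"
    using scale_left_distrib[of 1 1 B] scale_left_distrib[of 1 1 "\<tau> u"]
    by (simp add: scale_right_diff_distrib tau.add flip: tau_smul)
  then have "sqnorm ((B - (v - \<tau> v)) + (B - (w - \<tau> w))) \<ge> 4 * coboundary_sqdist B"
    using coboundary_sqdist_le[of B u] by (simp add: sqnorm_smul)
  then show ?thesis
    using sqnorm_add[of "B - (v - \<tau> v)" "B - (w - \<tau> w)"]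
      sqnorm_diff[of "B - (v - \<tau> v)" "B - (w - \<tau> w)"]
    by argo
qed

text \<open>First variation along \<open>f + t (f - \<tau> f)\<close>, which stays in the coset of coboundaries.\<close>
lemma sqnorm_tau_diff_le_if_almost_minimizer:
  assumes almost_min: "\<And>w. sqnorm f \<le> sqnorm (f - (w - \<tau> w)) + \<delta>"
  shows "sqnorm (f - \<tau> f) \<le> 4 * \<delta>"
proof -
  define g where "g = f - \<tau> f"
  define R where "R = Re (gns_inner f g)"
  have "\<delta> \<ge> 0" using almost_min[of 0] by (simp add: tau.zero)
  have "0 \<le> \<delta> + 2 * R * t + sqnorm g * t\<^sup>2" for t
  proof -
    have shift: "f - (smul (of_real (- t)) f - \<tau> (smul (of_real (- t)) f)) = f + smul (of_real t) g"
      by (simp add: g_def tau_smul tau.minus scale_right_diff_distrib)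
    have "sqnorm f \<le> sqnorm (f + smul (of_real t) g) + \<delta>"
      using almost_min[of "smul (of_real (- t)) f"] unfolding shift .
    then show ?thesis
      by (simp add: sqnorm_add sqnorm_smul gns_inner_smul_right R_def algebra_simps)
  qed
  then have R_sq: "R\<^sup>2 \<le> \<delta> * sqnorm g"
    by (rule quadratic_nonneg_discriminant[OF sqnorm_nonneg])
  have "sqnorm g \<le> 2 * R"
    using sqnorm_tau_le[of f] sqnorm_diff[of f "\<tau> f"]
    by (simp add: R_def g_def gns_inner_diff_right sqnorm_def)
  then have "(sqnorm g)\<^sup>2 \<le> (2 * R)\<^sup>2"
    by (intro power_mono sqnorm_nonneg)
  with R_sq have "sqnorm g * sqnorm g \<le> sqnorm g * (4 * \<delta>)"
    by (simp add: power2_eq_square algebra_simps)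
  then show ?thesis
    using \<open>\<delta> \<ge> 0\<close> sqnorm_nonneg[of g] unfolding g_def[symmetric]
    by (cases "sqnorm g = 0") (simp_all add: mult_le_cancel_left)
qed

text \<open>The mean ergodic decomposition: ergodicity identifies the limit of a minimizing sequence
  for the distance from \<open>B\<close> to the coboundaries \<open>w - \<tau> w\<close> as a constant.\<close>
lemma near_const_plus_coboundary_if_ergodic:
  assumes "ergodic smul st \<phi> \<tau>" and "\<epsilon> > 0"
  shows "\<exists>\<alpha> w. nrm (B - (smul \<alpha> 1 + (w - \<tau> w))) < \<epsilon>"
proof -
  define d where "d = coboundary_sqdist B"
  define \<delta> :: "nat \<Rightarrow> real" where "\<delta> j = inverse (real (Suc j))" for j
  obtain W where W: "\<And>j. sqnorm (B - (W j - \<tau> (W j))) < d + \<delta> j"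
    using exists_almost_minimizer[of "\<delta> _" B] unfolding d_def \<delta>_def
    by (metis of_nat_0_less_iff zero_less_Suc inverse_positive_iff_positive)
  define f where "f j = B - (W j - \<tau> (W j))" for j
  have "\<delta> \<longlonglongrightarrow> 0"
    unfolding \<delta>_def by (rule LIMSEQ_inverse_real_of_nat)
  have "phi_cauchy st \<phi> f"
  proof (rule phi_cauchy_if_sqnorm_diff_le[where e = "\<lambda>j. 2 * \<delta> j"])
    show "sqnorm (f m - f n) \<le> 2 * \<delta> m + 2 * \<delta> n" for m n
      using sqnorm_diff_almost_minimizers_le[of B "W m" "W n"] W[of m] W[of n]
      unfolding f_def d_def by argo
  qed (use \<open>\<delta> \<longlonglongrightarrow> 0\<close> tendsto_mult_right_zero in auto)
  moreover have "(\<lambda>j. nrm (\<tau> (f j) - f j)) \<longlonglongrightarrow> 0"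
  proof (rule tendsto_sandwich[OF _ _ tendsto_const])
    have "sqnorm (f j - \<tau> (f j)) \<le> 4 * \<delta> j" for j
    proof (rule sqnorm_tau_diff_le_if_almost_minimizer)
      fix w
      have shift: "f j - (w - \<tau> w) = B - ((W j + w) - \<tau> (W j + w))"
        by (simp add: f_def tau.add)
      have "d \<le> sqnorm (f j - (w - \<tau> w))"
        unfolding shift d_def by (rule coboundary_sqdist_le)
      with W[of j] show "sqnorm (f j) \<le> sqnorm (f j - (w - \<tau> w)) + \<delta> j"
        unfolding f_def by linarith
    qed
    then have "nrm (\<tau> (f j) - f j) \<le> sqrt (4 * \<delta> j)" for j
      using nrm_minus_commute[of "\<tau> (f j)" "f j"] by (simp add: nrm_eq_sqrt_sqnorm)
    then show "\<forall>\<^sub>F j in sequentially. nrm (\<tau> (f j) - f j) \<le> sqrt (4 * \<delta> j)"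
      by simp
    show "(\<lambda>j. sqrt (4 * \<delta> j)) \<longlonglongrightarrow> 0"
      using tendsto_real_sqrt[OF tendsto_mult_right_zero[OF \<open>\<delta> \<longlonglongrightarrow> 0\<close>, of 4]] by simp
  qed (simp add: nrm_nonneg)
  ultimately obtain \<alpha> where "(\<lambda>j. nrm (f j - smul \<alpha> 1)) \<longlonglongrightarrow> 0"
    using assms(1) unfolding ergodic_def by blast
  from LIMSEQ_D[OF this \<open>\<epsilon> > 0\<close>] obtain j where "nrm (f j - smul \<alpha> 1) < \<epsilon>"
    by (auto simp: nrm_nonneg)
  then have "nrm (B - (smul \<alpha> 1 + (W j - \<tau> (W j)))) < \<epsilon>"
    by (simp add: f_def algebra_simps)
  then show ?thesis by blast
qed

lemma clusters_in_mean_if_ergodic: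
  assumes "ergodic smul st \<phi> \<tau>"
  shows "clusters_in_mean y b"
  unfolding clusters_in_mean_def
proof (rule tendsto_if_dense[where F = "mean_corr y" and L = "\<lambda>b. cnj (\<phi> y) * \<phi> b"
      and D = "range (\<lambda>(\<alpha>, w). smul \<alpha> 1 + (w - \<tau> w))" and K = "nrm y"])
  show "\<exists>v\<in>range (\<lambda>(\<alpha>, w). smul \<alpha> 1 + (w - \<tau> w)). nrm (b - v) < \<epsilon>" if "\<epsilon> > 0" for \<epsilon>
    using near_const_plus_coboundary_if_ergodic[OF assms that] by fastforce
  show "mean_corr y v \<longlonglongrightarrow> cnj (\<phi> y) * \<phi> v"
    if "v \<in> range (\<lambda>(\<alpha>, w). smul \<alpha> 1 + (w - \<tau> w))" for v
    using that clusters_in_mean_const_plus_coboundary by (auto simp: clusters_in_mean_def)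
  show "cmod (mean_corr y b n - mean_corr y v n) \<le> nrm y * nrm (b - v)" for v n
    using norm_mean_corr_le[of y "b - v" n] by (simp add: mean_corr_diff_right)
qed (rule cmod_phi_prod_diff_right_le)

end

theorem proposition4p6:
  fixes smul :: "complex \<Rightarrow> 'a::ring_1 \<Rightarrow> 'a"
    and st :: "'a \<Rightarrow> 'a" and \<phi> :: "'a \<Rightarrow> complex" and \<tau> :: "'a \<Rightarrow> 'a"
    and S T :: "'a set"
  assumes "star_dynamical_system smul st \<phi> \<tau>"
    and "phi_total smul st \<phi> S"
    and "phi_total smul st \<phi> T"
  shows "(ergodic smul st \<phi> \<tau> \<longrightarrow>
            (\<forall>A B. (\<lambda>n. (\<Sum>k<n. \<phi> (A * (\<tau> ^^ k) B)) / of_nat n) \<longlonglongrightarrow> \<phi> A * \<phi> B))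
       \<and> ((\<forall>A\<in>st ` S. \<forall>B\<in>T. (\<lambda>n. (\<Sum>k<n. \<phi> (A * (\<tau> ^^ k) B)) / of_nat n) \<longlonglongrightarrow> \<phi> A * \<phi> B)
            \<longrightarrow> ergodic smul st \<phi> \<tau>)"
proof -
  interpret star_dynamics smul st \<phi> \<tau> by unfold_locales (rule assms(1))
  show ?thesis
  proof (intro conjI impI allI)
    fix A B assume "ergodic smul st \<phi> \<tau>"
    then have "clusters_in_mean (st A) B" by (rule clusters_in_mean_if_ergodic)
    then show "(\<lambda>n. (\<Sum>k<n. \<phi> (A * (\<tau> ^^ k) B)) / of_nat n) \<longlonglongrightarrow> \<phi> A * \<phi> B"
      by (simp add: clusters_in_mean_st_iff)
  next
    assume clusters: "\<forall>A\<in>st ` S. \<forall>B\<in>T.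
      (\<lambda>n. (\<Sum>k<n. \<phi> (A * (\<tau> ^^ k) B)) / of_nat n) \<longlonglongrightarrow> \<phi> A * \<phi> B"
    have "clusters_in_mean s b" if "s \<in> S" "b \<in> T" for s b
      using clusters that clusters_in_mean_st_iff[of "st s" b] by simp
    then show "ergodic smul st \<phi> \<tau>"
      by (intro ergodic_if_clusters_in_mean clusters_in_mean_if_total[OF assms(2,3)]) blast
  qed
qed

end
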